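(* Let $m>1$ be an integer and $k$ an odd positive integer. Then $\mathrm{msum}(mk,k)\ge 1-\frac1m$.
   Context: For positive integers $n>k$, let $S_n$ be the set of permutations $\pi=(\pi_1,\dots,\pi_n)$ of $1,\dots,n$, with cyclic indexing $\pi_{n+i}=\pi_i$, and $s_i=\sum_{j=0}^{k-1}\pi_{i+j}$ for $i=1,\dots,n$. Define $\mathrm{msum}(\pi,k)=\max_{1\le i\le n}s_i-\frac{k(n+1)}{2}$ and $\mathrm{msum}(n,k)=\min_{\pi\in S_n}\mathrm{msum}(\pi,k)$. *)

theory Defs
  imports Complex_Main "HOL-Combinatorics.Permutations"
begin

text \<open>A permutation \<pi> of 1..n is a function p with p permutes {1..n}; \<pi>_i = p i.
  Cyclic indexing: \<pi>_{n+i} = \<pi>_i, realised by cyc_idx.\<close>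

definition cyc_idx :: "nat \<Rightarrow> nat \<Rightarrow> nat" where
  "cyc_idx n i = ((i - 1) mod n) + 1"

definition window_sum :: "(nat \<Rightarrow> nat) \<Rightarrow> nat \<Rightarrow> nat \<Rightarrow> nat \<Rightarrow> nat" where
  "window_sum p n k i = (\<Sum>j<k. p (cyc_idx n (i + j)))"

definition msum_perm :: "(nat \<Rightarrow> nat) \<Rightarrow> nat \<Rightarrow> nat \<Rightarrow> real" where
  "msum_perm p n k =
     real (Max ((\<lambda>i. window_sum p n k i) ` {1..n})) - real k * (real n + 1) / 2"

definition msum :: "nat \<Rightarrow> nat \<Rightarrow> real" where
  "msum n k = Min ((\<lambda>p. msum_perm p n k) ` {p. p permutes {1..n}})"

end

theory Submission
  imports Defs
begin

text \<open>
  Read the permutation as an \<open>n\<close>-periodic sequence \<open>q\<close> with \<open>n = m k\<close> and let \<open>W i\<close> be the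
  sum of the window of length \<open>k\<close> starting at \<open>i\<close>, with maximum \<open>M\<close>. Since
  \<open>W (i + 1) - W i = q (i + k) - q i\<close>, telescoping along \<open>i, i + k, \<dots>, i + j k\<close> gives
  \<open>q (i + j k) - q i \<le> \<Sum>t<m. (M - W (i + t k)) = m M - n (n + 1) / 2\<close> for \<open>j \<le> m\<close>,
  because the \<open>m\<close> windows starting at \<open>i + t k\<close> tile one period.
  The \<open>m\<close> distinct values \<open>q (t k)\<close>, \<open>t < m\<close>, span at least \<open>m - 1\<close>, so
  \<open>m - 1 \<le> m M - n (n + 1) / 2 = m \<cdot> msum_perm\<close>.
\<close>

definition window :: "(nat \<Rightarrow> real) \<Rightarrow> nat \<Rightarrow> nat \<Rightarrow> real" where
  "window q k i = (\<Sum>j<k. q (i + j))"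

lemma window_Suc_diff: "window q k (Suc i) - window q k i = q (i + k) - q i"
proof -
  have "(\<Sum>j<Suc k. q (i + j)) = q i + window q k (Suc i)"
    unfolding window_def by (subst sum.lessThan_Suc_shift) simp
  moreover have "(\<Sum>j<Suc k. q (i + j)) = window q k i + q (i + k)"
    unfolding window_def by simp
  ultimately show ?thesis by simp
qed

lemma diff_eq_sum_window_diffs:
  "q (i + j * k) - q i = (\<Sum>t<j. window q k (Suc (i + t * k)) - window q k (i + t * k))"
proof -
  have "q (i + j * k) - q i = (\<Sum>t<j. q (i + Suc t * k) - q (i + t * k))"
    using sum_lessThan_telescope[of "\<lambda>t. q (i + t * k)" j] by simp
  also have "\<dots> = (\<Sum>t<j. window q k (Suc (i + t * k)) - window q k (i + t * k))"
    by (simp add: window_Suc_diff algebra_simps)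
  finally show ?thesis .
qed

lemma sum_lessThan_shift_periodic:
  fixes q :: "nat \<Rightarrow> 'a::cancel_comm_monoid_add"
  assumes per: "\<And>l. q (l + n) = q l"
  shows "(\<Sum>l<n. q (c + l)) = (\<Sum>l<n. q l)"
proof (induction c)
  case (Suc c)
  have "(\<Sum>l<Suc n. q (c + l)) = q c + (\<Sum>l<n. q (Suc c + l))"
    by (subst sum.lessThan_Suc_shift) simp
  moreover have "(\<Sum>l<Suc n. q (c + l)) = (\<Sum>l<n. q (c + l)) + q c"
    using per[of c] by (simp add: add.commute)
  ultimately show ?case using Suc by (simp add: add.commute)
qed simp

lemma sum_consecutive_windows: "(\<Sum>t<m. window q k (i + t * k)) = (\<Sum>l<m * k. q (i + l))"
proof -
  have "window q k (i + t * k) = (\<Sum>l\<in>{t * k..<t * k + k}. q (i + l))" for t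
    using sum.shift_bounds_nat_ivl[of "\<lambda>l. q (i + l)" 0 "t * k" k]
    by (simp add: window_def atLeast0LessThan algebra_simps)
  then show ?thesis by (simp add: sum.nat_group)
qed

lemma periodic_jump_le:
  assumes per: "\<And>l. q (l + m * k) = q l" and M: "\<And>i. window q k i \<le> M" and "j \<le> m"
  shows "q (i + j * k) - q i \<le> real m * M - (\<Sum>l<m * k. q l)"
proof -
  have "q (i + j * k) - q i = (\<Sum>t<j. window q k (Suc (i + t * k)) - window q k (i + t * k))"
    by (rule diff_eq_sum_window_diffs)
  also have "\<dots> \<le> (\<Sum>t<j. M - window q k (i + t * k))"
    by (intro sum_mono) (use M in auto)
  also have "\<dots> \<le> (\<Sum>t<m. M - window q k (i + t * k))"
    by (intro sum_mono2) (use \<open>j \<le> m\<close> M in auto)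
  also have "\<dots> = real m * M - (\<Sum>l<m * k. q (i + l))"
    by (simp add: sum_subtractf sum_consecutive_windows)
  also have "\<dots> = real m * M - (\<Sum>l<m * k. q l)"
    using sum_lessThan_shift_periodic[of q "m * k", OF per] by simp
  finally show ?thesis .
qed

lemma periodic_spread_le:
  assumes per: "\<And>l. q (l + m * k) = q l" and M: "\<And>i. window q k i \<le> M"
    and "a < m" "b < m"
  shows "q (b * k) - q (a * k) \<le> real m * M - (\<Sum>l<m * k. q l)"
proof (cases "a \<le> b")
  case True
  then have "a * k + (b - a) * k = b * k" by (simp add: diff_mult_distrib)
  then show ?thesis using periodic_jump_le[OF per M, of "b - a" "a * k"] \<open>b < m\<close> by simp
next
  case False
  have "a * k \<le> (m + b) * k" using \<open>a < m\<close> by simp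
  then have "a * k + (m + b - a) * k = b * k + m * k"
    by (simp add: diff_mult_distrib algebra_simps)
  then show ?thesis using periodic_jump_le[OF per M, of "m + b - a" "a * k"] False per by simp
qed

lemma card_le_Max_minus_Min:
  fixes S :: "nat set"
  assumes "finite S" "S \<noteq> {}"
  shows "real (card S) - 1 \<le> real (Max S) - real (Min S)"
proof -
  have "card S \<le> card {Min S..Max S}"
    using assms by (intro card_mono) auto
  moreover have "Min S \<le> Max S" using assms by simp
  ultimately show ?thesis by simp
qed

lemma window_sum_eq_window:
  "real (window_sum p n k (Suc i)) = window (\<lambda>l. real (p (l mod n + 1))) k i"
  unfolding window_sum_def window_def cyc_idx_def by simp

lemma window_le_Max_window_sum:
  assumes "n > 0"
  shows "window (\<lambda>l. real (p (l mod n + 1))) k i \<le> real (Max ((\<lambda>i. window_sum p n k i) ` {1..n}))"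
proof -
  have "window (\<lambda>l. real (p (l mod n + 1))) k i = real (window_sum p n k (Suc (i mod n)))"
    using assms by (simp add: window_sum_eq_window window_def mod_add_left_eq)
  moreover have "Suc (i mod n) \<in> {1..n}" using assms by (simp add: Suc_leI)
  ultimately show ?thesis by simp
qed

lemma sum_permutation_values:
  assumes "p permutes {1..n}"
  shows "(\<Sum>l<n. real (p (l mod n + 1))) = real n * (real n + 1) / 2"
proof -
  have "(\<Sum>l<n. real (p (l mod n + 1))) = (\<Sum>x = Suc 0..n. real (p x))"
    by (simp add: sum.atLeast1_atMost_eq)
  also have "\<dots> = (\<Sum>x = Suc 0..n. real x)"
    using sum.permute[OF assms, of real] by (simp add: comp_def)
  finally show ?thesis
    using double_gauss_sum_from_Suc_0[where 'a = real, of n] by simp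
qed

lemma msum_perm_ge:
  assumes perm: "p permutes {1..m * k}" and "m > 1" "k > 0"
  shows "msum_perm p (m * k) k \<ge> 1 - 1 / real m"
proof -
  define n where "n = m * k"
  define q where "q l = real (p (l mod n + 1))" for l
  define M where "M = real (Max ((\<lambda>i. window_sum p n k i) ` {1..n}))"
  have "n > 0" using assms by (simp add: n_def)
  have per: "q (l + m * k) = q l" for l by (simp add: q_def n_def)
  have M: "window q k i \<le> M" for i
    unfolding q_def M_def using window_le_Max_window_sum[OF \<open>n > 0\<close>] .
  have total: "(\<Sum>l<m * k. q l) = real n * (real n + 1) / 2"
    unfolding q_def n_def using sum_permutation_values[OF perm] by simp
  define S where "S = (\<lambda>t. p (t * k + 1)) ` {..<m}"
  have "inj_on (\<lambda>t. p (t * k + 1)) {..<m}"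
  proof (rule inj_onI)
    fix a b assume "a \<in> {..<m}" "b \<in> {..<m}" "p (a * k + 1) = p (b * k + 1)"
    moreover have "t * k + 1 \<in> {1..m * k}" if "t < m" for t
      using that \<open>k > 0\<close> by (simp add: Suc_leI)
    ultimately have "a * k + 1 = b * k + 1"
      using inj_onD[OF permutes_inj_on[OF perm]] by blast
    then show "a = b" using \<open>k > 0\<close> by simp
  qed
  then have "card S = m" by (simp add: S_def card_image)
  have S: "finite S" "S \<noteq> {}" using \<open>m > 1\<close> by (auto simp: S_def)
  obtain a where a: "a < m" "p (a * k + 1) = Min S" using Min_in[OF S] by (auto simp: S_def)
  obtain b where b: "b < m" "p (b * k + 1) = Max S" using Max_in[OF S] by (auto simp: S_def)
  have q_block: "q (t * k) = real (p (t * k + 1))" if "t < m" for t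
    using that \<open>k > 0\<close> by (simp add: q_def n_def)
  have "real m - 1 \<le> real (Max S) - real (Min S)"
    using card_le_Max_minus_Min[OF S] \<open>card S = m\<close> by simp
  also have "\<dots> = q (b * k) - q (a * k)"
    using q_block a b by simp
  also have "\<dots> \<le> real m * M - real n * (real n + 1) / 2"
    using periodic_spread_le[OF per M a(1) b(1)] total by simp
  also have "\<dots> = real m * msum_perm p n k"
    unfolding msum_perm_def M_def n_def by (simp add: algebra_simps)
  finally have "real m - 1 \<le> real m * msum_perm p n k" .
  then show ?thesis
    using \<open>m > 1\<close> by (simp add: n_def field_simps)
qed

theorem lemma5p2:
  fixes m k :: nat
  assumes "m > 1" and "k > 0" and "odd k"
  shows "msum (m * k) k \<ge> 1 - 1 / real m"
proof -
  have "finite {p. p permutes {1..m * k}}" by (rule finite_permutations) simp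
  moreover have "{p. p permutes {1..m * k}} \<noteq> {}" using permutes_id by blast
  ultimately show ?thesis
    unfolding msum_def using msum_perm_ge[OF _ assms(1,2)] by (subst Min_ge_iff) auto
qed

end
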